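(* Let $L\in\mathbb{Z}_{>0}$ and let $\mathcal{Z}(\lambda_1,\dots,\lambda_L)=\langle\bar 0|\mathcal{B}(\lambda_1)\cdots\mathcal{B}(\lambda_L)|0\rangle$ be the partition function of the six-vertex model with one reflecting end and domain-wall boundaries (see context). Then, writing $x_i=e^{2\lambda_i}$, one has $\mathcal{Z}(\lambda_1,\dots,\lambda_L)=\bar{\mathcal{Z}}(x_1,\dots,x_L)\prod_{i=1}^{L}x_i^{-L}$, where $\bar{\mathcal{Z}}(x_1,\dots,x_L)$ is a polynomial of degree $2L$ in each of its variables $x_i$.
   Context: Parameters $\gamma,h,\mu_1,\dots,\mu_L\in\mathbb{C}$. Set $a(\lambda)=\sinh(\lambda+\gamma)$, $b(\lambda)=\sinh(\lambda)$, $c(\lambda)=\sinh(\gamma)$. The $R$-matrix $\mathcal{R}(\lambda)\in\mathrm{End}(\mathbb{C}^2\otimes\mathbb{C}^2)$ is, in the basis $e_1\otimes e_1,e_1\otimes e_2,e_2\otimes e_1,e_2\otimes e_2$, the matrix with rows $(a,0,0,0)$, $(0,b,c,0)$, $(0,c,b,0)$, $(0,0,0,a)$ evaluated at $\lambda$. Let $\mathbb{V}_0\cong\mathbb{C}^2$ and $\mathbb{V}_{\mathcal{Q}}=(\mathbb{C}^2)^{\otimes L}$; $\mathcal{R}_{0j}$ acts on $\mathbb{V}_0$ and the $j$-th factor of $\mathbb{V}_{\mathcal{Q}}$. Define $\tau(\lambda)=\mathcal{R}_{0L}(\lambda-\mu_L)\cdots\mathcal{R}_{01}(\lambda-\mu_1)$,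 $\bar\tau(\lambda)=\mathcal{R}_{01}(\lambda+\mu_1)\cdots\mathcal{R}_{0L}(\lambda+\mu_L)$, $\mathcal{K}(\lambda)=\mathrm{diag}(\sinh(h+\lambda),\sinh(h-\lambda))$ on $\mathbb{V}_0$, and $\mathcal{T}(\lambda)=\tau(\lambda)\mathcal{K}(\lambda)\bar\tau(\lambda)=\begin{pmatrix}\mathcal{A}(\lambda)&\mathcal{B}(\lambda)\\ \mathcal{C}(\lambda)&\mathcal{D}(\lambda)\end{pmatrix}$ in $\mathbb{V}_0$, with entries in $\mathrm{End}(\mathbb{V}_{\mathcal{Q}})$. Let $|0\rangle=e_1^{\otimes L}$ and $\langle\bar 0|$ the transpose of $e_2^{\otimes L}$, $e_1=(1,0)^T$, $e_2=(0,1)^T$. *)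

theory Defs
  imports "HOL-Analysis.Analysis"
begin

text \<open>Basis index convention: 0 stands for e_1, 1 stands for e_2.
  A basis vector of V_Q = (C^2)^{tensor L} is a function s in {1..L} ->_E {0,1},
  s j being the state at site j.  Operators on V_0 (x) V_Q are given by their
  matrix entries  M a s a' s'  (row (a,s), column (a',s')).\<close>

type_synonym qstate = "nat \<Rightarrow> nat"
type_synonym op0Q = "nat \<Rightarrow> qstate \<Rightarrow> nat \<Rightarrow> qstate \<Rightarrow> complex"
type_synonym opQ = "qstate \<Rightarrow> qstate \<Rightarrow> complex"

definition qstates :: "nat \<Rightarrow> qstate set" where
  "qstates L = ({1..L} \<rightarrow>\<^sub>E {0::nat, 1})"

definition Rmat :: "complex \<Rightarrow> complex \<Rightarrow> nat \<Rightarrow> nat \<Rightarrow> nat \<Rightarrow> nat \<Rightarrow> complex" where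
  "Rmat \<gamma> lm i j k l =
     (if i = j \<and> j = k \<and> k = l then sinh (lm + \<gamma>)
      else if i \<noteq> j \<and> i = k \<and> j = l then sinh lm
      else if i \<noteq> j \<and> i = l \<and> j = k then sinh \<gamma>
      else 0)"

definition R0j :: "nat \<Rightarrow> complex \<Rightarrow> nat \<Rightarrow> complex \<Rightarrow> op0Q" where
  "R0j L \<gamma> j lm a s a' s' =
     Rmat \<gamma> lm a (s j) a' (s' j) * (if \<forall>k\<in>{1..L} - {j}. s k = s' k then 1 else 0)"

definition opmul :: "nat \<Rightarrow> op0Q \<Rightarrow> op0Q \<Rightarrow> op0Q" where
  "opmul L A B a s a' s' = (\<Sum>b\<in>{0::nat,1}. \<Sum>t\<in>qstates L. A a s b t * B b t a' s')"

definition opid :: op0Q where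
  "opid a s a' s' = (if a = a' \<and> s = s' then 1 else 0)"

fun tau_aux :: "nat \<Rightarrow> complex \<Rightarrow> (nat \<Rightarrow> complex) \<Rightarrow> complex \<Rightarrow> nat \<Rightarrow> op0Q" where
  "tau_aux L \<gamma> \<mu> lm 0 = opid"
| "tau_aux L \<gamma> \<mu> lm (Suc n) =
     opmul L (R0j L \<gamma> (Suc n) (lm - \<mu> (Suc n))) (tau_aux L \<gamma> \<mu> lm n)"

fun taubar_aux :: "nat \<Rightarrow> complex \<Rightarrow> (nat \<Rightarrow> complex) \<Rightarrow> complex \<Rightarrow> nat \<Rightarrow> op0Q" where
  "taubar_aux L \<gamma> \<mu> lm 0 = opid"
| "taubar_aux L \<gamma> \<mu> lm (Suc n) =
     opmul L (taubar_aux L \<gamma> \<mu> lm n) (R0j L \<gamma> (Suc n) (lm + \<mu> (Suc n)))"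

definition tau :: "nat \<Rightarrow> complex \<Rightarrow> (nat \<Rightarrow> complex) \<Rightarrow> complex \<Rightarrow> op0Q" where
  "tau L \<gamma> \<mu> lm = tau_aux L \<gamma> \<mu> lm L"

definition taubar :: "nat \<Rightarrow> complex \<Rightarrow> (nat \<Rightarrow> complex) \<Rightarrow> complex \<Rightarrow> op0Q" where
  "taubar L \<gamma> \<mu> lm = taubar_aux L \<gamma> \<mu> lm L"

definition Kop :: "complex \<Rightarrow> complex \<Rightarrow> op0Q" where
  "Kop h lm a s a' s' =
     (if a = a' \<and> s = s' then (if a = 0 then sinh (h + lm) else sinh (h - lm)) else 0)"

definition Tmon :: "nat \<Rightarrow> complex \<Rightarrow> complex \<Rightarrow> (nat \<Rightarrow> complex) \<Rightarrow> complex \<Rightarrow> op0Q" where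
  "Tmon L \<gamma> h \<mu> lm = opmul L (opmul L (tau L \<gamma> \<mu> lm) (Kop h lm)) (taubar L \<gamma> \<mu> lm)"

definition Bop :: "nat \<Rightarrow> complex \<Rightarrow> complex \<Rightarrow> (nat \<Rightarrow> complex) \<Rightarrow> complex \<Rightarrow> opQ" where
  "Bop L \<gamma> h \<mu> lm s s' = Tmon L \<gamma> h \<mu> lm 0 s 1 s'"

definition qmul :: "nat \<Rightarrow> opQ \<Rightarrow> opQ \<Rightarrow> opQ" where
  "qmul L A B s s' = (\<Sum>t\<in>qstates L. A s t * B t s')"

definition qid :: opQ where
  "qid s s' = (if s = s' then 1 else 0)"

fun Bprod :: "nat \<Rightarrow> complex \<Rightarrow> complex \<Rightarrow> (nat \<Rightarrow> complex) \<Rightarrow> (nat \<Rightarrow> complex) \<Rightarrow> nat \<Rightarrow> opQ" where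
  "Bprod L \<gamma> h \<mu> lam 0 = qid"
| "Bprod L \<gamma> h \<mu> lam (Suc n) = qmul L (Bprod L \<gamma> h \<mu> lam n) (Bop L \<gamma> h \<mu> (lam (Suc n)))"

text \<open>Z(lambda_1,...,lambda_L) = <0bar| B(lambda_1) ... B(lambda_L) |0>,
  |0> = e_1^{(x)L}, <0bar| = transpose of e_2^{(x)L}\<close>
definition Zpf :: "nat \<Rightarrow> complex \<Rightarrow> complex \<Rightarrow> (nat \<Rightarrow> complex) \<Rightarrow> (nat \<Rightarrow> complex) \<Rightarrow> complex" where
  "Zpf L \<gamma> h \<mu> lam = Bprod L \<gamma> h \<mu> lam L (restrict (\<lambda>j. 1) {1..L}) (restrict (\<lambda>j. 0) {1..L})"

end

theory Submission
  imports Defs "HOL-Computational_Algebra.Polynomial"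
begin

text \<open>Each entry of the factors \<open>R\<^sub>0\<^sub>j(\<lambda> \<mp> \<mu>\<^sub>j)\<close> and \<open>K(\<lambda>)\<close> is a Laurent polynomial in
  \<open>e\<^sup>\<lambda>\<close> of degree 1 on the diagonal of the auxiliary space, but of degree 0 off it, because the
  off-diagonal entries of the R-matrix are the constant \<open>sinh \<gamma>\<close>. Degrees add under products,
  and a product entry that passes through the off-diagonal twice loses two degrees; so every
  entry of \<open>T(\<lambda>)\<close>, a product of \<open>2L + 1\<close> factors, has degree \<open>2L + 1\<close> on the diagonal and
  \<open>2L\<close> off it. As each factor has a definite parity in \<open>e\<^sup>\<lambda>\<close>, \<open>B(\<lambda>)\<close> has the form
  \<open>p(e\<^sup>2\<^sup>\<lambda>) e\<^sup>-\<^sup>2\<^sup>L\<^sup>\<lambda>\<close> with \<open>deg p \<le> 2L\<close>. The partition function is a finite sum of products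
  of such functions, one in each \<open>\<lambda>\<^sub>i\<close>, and expanding these products gives the claim.\<close>

text \<open>A Laurent polynomial in \<open>e\<^sup>x\<close> with exponents in \<open>{-N, -N + 2, ..., N}\<close>; for \<open>N < 0\<close>
  only the zero function.\<close>

definition laurent_exp :: "int \<Rightarrow> (complex \<Rightarrow> complex) \<Rightarrow> bool" where
  "laurent_exp N f \<longleftrightarrow> (\<exists>p :: complex poly. (p = 0 \<or> int (degree p) \<le> N) \<and>
     (\<forall>x. f x = poly p (exp x ^ 2) / exp x ^ nat N))"

lemma laurent_exp_zero: "laurent_exp N (\<lambda>_. 0)"
  unfolding laurent_exp_def by (intro exI[of _ 0]) simp

lemma laurent_exp_const: "laurent_exp 0 (\<lambda>_. c)"
  unfolding laurent_exp_def by (intro exI[of _ "[:c:]"]) simp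

lemma laurent_exp_add:
  assumes "laurent_exp N f" "laurent_exp N g"
  shows "laurent_exp N (\<lambda>x. f x + g x)"
proof -
  obtain p q where p: "p = 0 \<or> int (degree p) \<le> N" "\<forall>x. f x = poly p (exp x ^ 2) / exp x ^ nat N"
    and q: "q = 0 \<or> int (degree q) \<le> N" "\<forall>x. g x = poly q (exp x ^ 2) / exp x ^ nat N"
    using assms unfolding laurent_exp_def by blast
  have "p + q = 0 \<or> int (degree (p + q)) \<le> N"
    using p(1) q(1) degree_add_le_max[of p q] by (cases "p = 0"; cases "q = 0") auto
  moreover have "\<forall>x. f x + g x = poly (p + q) (exp x ^ 2) / exp x ^ nat N"
    using p(2) q(2) by (simp add: add_divide_distrib)
  ultimately show ?thesis
    unfolding laurent_exp_def by blast
qed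

lemma laurent_exp_sum:
  "finite S \<Longrightarrow> (\<And>t. t \<in> S \<Longrightarrow> laurent_exp N (f t)) \<Longrightarrow> laurent_exp N (\<lambda>x. \<Sum>t\<in>S. f t x)"
  by (induction S rule: finite_induct) (simp_all add: laurent_exp_zero laurent_exp_add)

lemma laurent_exp_mult:
  assumes "laurent_exp N f" "laurent_exp M g"
  shows "laurent_exp (N + M) (\<lambda>x. f x * g x)"
proof -
  obtain p q where p: "p = 0 \<or> int (degree p) \<le> N" "\<forall>x. f x = poly p (exp x ^ 2) / exp x ^ nat N"
    and q: "q = 0 \<or> int (degree q) \<le> M" "\<forall>x. g x = poly q (exp x ^ 2) / exp x ^ nat M"
    using assms unfolding laurent_exp_def by blast
  show ?thesis
  proof (cases "p = 0 \<or> q = 0")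
    case True
    with p(2) q(2) have "(\<lambda>x. f x * g x) = (\<lambda>_. 0)"
      by auto
    then show ?thesis
      by (simp add: laurent_exp_zero)
  next
    case False
    with p(1) q(1) have "int (degree (p * q)) \<le> N + M" "nat (N + M) = nat N + nat M"
      using degree_mult_le[of p q] by auto
    moreover have "\<forall>x. f x * g x = poly (p * q) (exp x ^ 2) / exp x ^ (nat N + nat M)"
      using p(2) q(2) by (simp add: power_add)
    ultimately show ?thesis
      unfolding laurent_exp_def by metis
  qed
qed

lemma laurent_exp_cmult: "laurent_exp N f \<Longrightarrow> laurent_exp N (\<lambda>x. c * f x)"
  using laurent_exp_mult[OF laurent_exp_const] by fastforce

lemma laurent_exp_add_two:
  assumes "laurent_exp N f"
  shows "laurent_exp (N + 2) f"
proof -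
  obtain p where p: "p = 0 \<or> int (degree p) \<le> N" "\<forall>x. f x = poly p (exp x ^ 2) / exp x ^ nat N"
    using assms unfolding laurent_exp_def by blast
  show ?thesis
  proof (cases "p = 0")
    case True
    with p(2) have "f = (\<lambda>_. 0)"
      by auto
    then show ?thesis
      by (simp add: laurent_exp_zero)
  next
    case False
    with p(1) have "int (degree (pCons 0 p)) \<le> N + 2" "nat (N + 2) = nat N + 2"
      by auto
    moreover have "\<forall>x. f x = poly (pCons 0 p) (exp x ^ 2) / exp x ^ (nat N + 2)"
      using p(2) by (simp add: power_add power2_eq_square)
    ultimately show ?thesis
      unfolding laurent_exp_def by metis
  qed
qed

lemma laurent_exp_sinh: "laurent_exp 1 (\<lambda>x. sinh (x + c))"
proof -
  have "sinh (x + c) = poly [:- inverse (exp c) / 2, exp c / 2:] (exp x ^ 2) / exp x ^ nat 1" for x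
    unfolding sinh_field_def exp_minus exp_add by (simp add: field_simps power2_eq_square)
  then show ?thesis
    unfolding laurent_exp_def by (intro exI[of _ "[:- inverse (exp c) / 2, exp c / 2:]"]) simp
qed

definition entry_bound :: "int \<Rightarrow> nat \<Rightarrow> nat \<Rightarrow> int" where
  "entry_bound n a b = (if a = b then n else n - 1)"

definition entry_degrees :: "int \<Rightarrow> (complex \<Rightarrow> op0Q) \<Rightarrow> bool" where
  "entry_degrees n M \<longleftrightarrow>
     (\<forall>a\<in>{0, 1}. \<forall>b\<in>{0, 1}. \<forall>s s'. laurent_exp (entry_bound n a b) (\<lambda>x. M x a s b s'))"

lemma laurent_exp_entry_bound_add:
  assumes "a \<in> {0, 1}" "b \<in> {0, 1}" "a' \<in> {0, 1}"
    and "laurent_exp (entry_bound n a b + entry_bound m b a') f"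
  shows "laurent_exp (entry_bound (n + m) a a') f"
proof (cases "a = a' \<and> b \<noteq> a")
  case True
  then have "entry_bound (n + m) a a' = entry_bound n a b + entry_bound m b a' + 2"
    by (simp add: entry_bound_def)
  then show ?thesis
    using laurent_exp_add_two[OF assms(4)] by simp
next
  case False
  with assms(1-3) have "entry_bound (n + m) a a' = entry_bound n a b + entry_bound m b a'"
    by (auto simp: entry_bound_def)
  then show ?thesis
    using assms(4) by simp
qed

lemma finite_qstates: "finite (qstates L)"
  unfolding qstates_def by (rule finite_PiE) auto

lemma entry_degrees_opmul:
  assumes "entry_degrees n X" "entry_degrees m Y"
  shows "entry_degrees (n + m) (\<lambda>x. opmul L (X x) (Y x))"
  unfolding entry_degrees_def
proof (intro ballI allI)
  fix a a' :: nat and s s' :: qstate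
  assume a: "a \<in> {0, 1}" and a': "a' \<in> {0, 1}"
  have intermediate:
    "laurent_exp (entry_bound (n + m) a a') (\<lambda>x. \<Sum>t\<in>qstates L. X x a s b t * Y x b t a' s')"
    if b: "b \<in> {0, 1}" for b
    using assms a a' b unfolding entry_degrees_def
    by (intro laurent_exp_entry_bound_add[OF a b a'] laurent_exp_sum finite_qstates laurent_exp_mult)
      auto
  show "laurent_exp (entry_bound (n + m) a a') (\<lambda>x. opmul L (X x) (Y x) a s a' s')"
    using laurent_exp_add[OF intermediate intermediate] by (simp add: opmul_def)
qed

lemma entry_degrees_opid: "entry_degrees 0 (\<lambda>_. opid)"
  unfolding entry_degrees_def entry_bound_def opid_def
  by (auto simp: laurent_exp_const laurent_exp_zero)

lemma entry_degrees_R0j: "entry_degrees 1 (\<lambda>x. R0j L \<gamma> j (x + c))"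
  unfolding entry_degrees_def
proof (intro ballI allI)
  fix a b :: nat and s s' :: qstate
  define \<delta> :: complex where "\<delta> = (if \<forall>k\<in>{1..L} - {j}. s k = s' k then 1 else 0)"
  show "laurent_exp (entry_bound 1 a b) (\<lambda>x. R0j L \<gamma> j (x + c) a s b s')"
  proof (cases "a = b")
    case True
    have "(\<lambda>x. R0j L \<gamma> j (x + c) a s b s') = (\<lambda>x. (\<delta> * (if s j = s' j then 1 else 0)) *
        sinh (x + (c + (if a = s j then \<gamma> else 0))))"
      using True by (auto simp: R0j_def Rmat_def \<delta>_def fun_eq_iff add.assoc)
    moreover have "entry_bound 1 a b = 1"
      using True by (simp add: entry_bound_def)
    ultimately show ?thesis
      by (simp only:) (rule laurent_exp_cmult[OF laurent_exp_sinh])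
  next
    case False
    then have "(\<lambda>x. R0j L \<gamma> j (x + c) a s b s') =
        (\<lambda>_. \<delta> * (if a \<noteq> s j \<and> a = s' j \<and> s j = b then sinh \<gamma> else 0))"
      by (auto simp: R0j_def Rmat_def \<delta>_def fun_eq_iff)
    then show ?thesis
      using False by (simp add: entry_bound_def laurent_exp_const)
  qed
qed

lemma entry_degrees_Kop: "entry_degrees 1 (\<lambda>x. Kop h x)"
  unfolding entry_degrees_def
proof (intro ballI allI)
  fix a b :: nat and s s' :: qstate
  show "laurent_exp (entry_bound 1 a b) (\<lambda>x. Kop h x a s b s')"
  proof (cases "a = b")
    case True
    have "sinh (h - x) = - sinh (x + - h)" for x :: complex
      using sinh_minus[of "x + - h"] by simp
    then have "(\<lambda>x. Kop h x a s b s') = (\<lambda>x. (if s = s' then (if a = 0 then 1 else - 1) else 0) *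
        sinh (x + (if a = 0 then h else - h)))"
      using True by (auto simp: Kop_def fun_eq_iff add.commute)
    moreover have "entry_bound 1 a b = 1"
      using True by (simp add: entry_bound_def)
    ultimately show ?thesis
      by (simp only:) (rule laurent_exp_cmult[OF laurent_exp_sinh])
  next
    case False
    then show ?thesis
      by (simp add: Kop_def laurent_exp_zero)
  qed
qed

lemma entry_degrees_tau_aux: "entry_degrees (int n) (\<lambda>x. tau_aux L \<gamma> \<mu> x n)"
proof (induction n)
  case 0
  then show ?case
    by (simp add: entry_degrees_opid)
next
  case (Suc n)
  then show ?case
    using entry_degrees_opmul[where L = L, OF entry_degrees_R0j[of L \<gamma> "Suc n" "- \<mu> (Suc n)"] Suc.IH]
    by simp
qed

lemma entry_degrees_taubar_aux: "entry_degrees (int n) (\<lambda>x. taubar_aux L \<gamma> \<mu> x n)"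
proof (induction n)
  case 0
  then show ?case
    by (simp add: entry_degrees_opid)
next
  case (Suc n)
  then show ?case
    using entry_degrees_opmul[where L = L, OF Suc.IH entry_degrees_R0j[of L \<gamma> "Suc n" "\<mu> (Suc n)"]]
    by (simp add: add.commute)
qed

lemma entry_degrees_Tmon: "entry_degrees (2 * int L + 1) (\<lambda>x. Tmon L \<gamma> h \<mu> x)"
proof -
  have "entry_degrees (int L + 1 + int L) (\<lambda>x. Tmon L \<gamma> h \<mu> x)"
    unfolding Tmon_def tau_def taubar_def
    by (intro entry_degrees_opmul entry_degrees_tau_aux entry_degrees_Kop entry_degrees_taubar_aux)
  then show ?thesis
    by (simp add: algebra_simps)
qed

lemma Bop_eq_poly_exp:
  "\<exists>p. degree p \<le> 2 * L \<and> (\<forall>x. Bop L \<gamma> h \<mu> x s s' = poly p (exp (2 * x)) / exp (2 * x) ^ L)"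
proof -
  have "laurent_exp (2 * int L) (\<lambda>x. Bop L \<gamma> h \<mu> x s s')"
    using entry_degrees_Tmon[of L \<gamma> h \<mu>]
    unfolding entry_degrees_def Bop_def entry_bound_def by auto
  then obtain p where "p = 0 \<or> int (degree p) \<le> 2 * int L"
    and "\<forall>x. Bop L \<gamma> h \<mu> x s s' = poly p (exp x ^ 2) / exp x ^ nat (2 * int L)"
    unfolding laurent_exp_def by blast
  then show ?thesis
    by (intro exI[of _ p]) (auto simp: exp_double power_mult nat_mult_distrib)
qed

definition multi_laurent :: "nat \<Rightarrow> nat \<Rightarrow> ((nat \<Rightarrow> complex) \<Rightarrow> complex) \<Rightarrow> bool" where
  "multi_laurent L n F \<longleftrightarrow> (\<exists>c :: (nat \<Rightarrow> nat) \<Rightarrow> complex. \<forall>lam.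
     F lam = (\<Sum>e\<in>{1..n} \<rightarrow>\<^sub>E {0..2 * L}. c e * (\<Prod>i=1..n. exp (2 * lam i) ^ e i))
             * (\<Prod>i=1..n. inverse (exp (2 * lam i) ^ L)))"

lemma multi_laurent_const: "multi_laurent L 0 (\<lambda>_. k)"
  unfolding multi_laurent_def by (intro exI[of _ "\<lambda>_. k"]) simp

lemma multi_laurent_zero: "multi_laurent L n (\<lambda>_. 0)"
  unfolding multi_laurent_def by (intro exI[of _ "\<lambda>_. 0"]) simp

lemma multi_laurent_add:
  assumes "multi_laurent L n F" "multi_laurent L n G"
  shows "multi_laurent L n (\<lambda>lam. F lam + G lam)"
proof -
  obtain c d where
    "\<forall>lam. F lam = (\<Sum>e\<in>{1..n} \<rightarrow>\<^sub>E {0..2 * L}. c e * (\<Prod>i=1..n. exp (2 * lam i) ^ e i))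
       * (\<Prod>i=1..n. inverse (exp (2 * lam i) ^ L))"
    "\<forall>lam. G lam = (\<Sum>e\<in>{1..n} \<rightarrow>\<^sub>E {0..2 * L}. d e * (\<Prod>i=1..n. exp (2 * lam i) ^ e i))
       * (\<Prod>i=1..n. inverse (exp (2 * lam i) ^ L))"
    using assms unfolding multi_laurent_def by blast
  then show ?thesis
    unfolding multi_laurent_def
    by (intro exI[of _ "\<lambda>e. c e + d e"]) (simp add: sum.distrib distrib_right)
qed

lemma multi_laurent_sum:
  "finite S \<Longrightarrow> (\<And>t. t \<in> S \<Longrightarrow> multi_laurent L n (F t)) \<Longrightarrow>
    multi_laurent L n (\<lambda>lam. \<Sum>t\<in>S. F t lam)"
  by (induction S rule: finite_induct) (simp_all add: multi_laurent_zero multi_laurent_add)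

lemma sum_PiE_insert:
  assumes "x \<notin> S"
  shows "(\<Sum>g\<in>PiE (insert x S) T. f g) = (\<Sum>(y, g)\<in>T x \<times> PiE S T. f (g(x := y)))"
  using assms
  by (intro sum.reindex_bij_witness[of _ "\<lambda>(y, g). g(x := y)" "\<lambda>g. (g x, g(x := undefined))"])
    (auto simp: PiE_def extensional_def)

lemma multi_laurent_mult_poly:
  assumes "multi_laurent L n F" "degree p \<le> 2 * L"
  shows "multi_laurent L (Suc n)
    (\<lambda>lam. F lam * (poly p (exp (2 * lam (Suc n))) / exp (2 * lam (Suc n)) ^ L))"
proof -
  obtain c where c: "\<forall>lam. F lam =
      (\<Sum>g\<in>{1..n} \<rightarrow>\<^sub>E {0..2 * L}. c g * (\<Prod>i=1..n. exp (2 * lam i) ^ g i))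
      * (\<Prod>i=1..n. inverse (exp (2 * lam i) ^ L))"
    using assms(1) unfolding multi_laurent_def by blast
  define c' where "c' e = coeff p (e (Suc n)) * c (e(Suc n := undefined))" for e :: "nat \<Rightarrow> nat"
  have ins: "{1..Suc n} = insert (Suc n) {1..n}" and nin: "Suc n \<notin> {1..n}"
    by auto
  have "F lam * (poly p (exp (2 * lam (Suc n))) / exp (2 * lam (Suc n)) ^ L) =
      (\<Sum>e\<in>{1..Suc n} \<rightarrow>\<^sub>E {0..2 * L}. c' e * (\<Prod>i=1..Suc n. exp (2 * lam i) ^ e i))
      * (\<Prod>i=1..Suc n. inverse (exp (2 * lam i) ^ L))" for lam
  proof -
    define X where "X i = exp (2 * lam i)" for i
    define A where "A = {0..2 * L}"
    have F: "F lam = (\<Sum>g\<in>{1..n} \<rightarrow>\<^sub>E A. c g * (\<Prod>i=1..n. X i ^ g i))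
        * (\<Prod>i=1..n. inverse (X i ^ L))"
      using c unfolding X_def A_def by blast
    have "poly p (X (Suc n)) = (\<Sum>y\<in>A. coeff p y * X (Suc n) ^ y)"
      using assms(2) unfolding poly_altdef A_def atLeast0AtMost
      by (intro sum.mono_neutral_left) (auto simp: coeff_eq_0)
    then have "poly p (X (Suc n)) * (\<Sum>g\<in>{1..n} \<rightarrow>\<^sub>E A. c g * (\<Prod>i=1..n. X i ^ g i)) =
        (\<Sum>(y, g)\<in>A \<times> ({1..n} \<rightarrow>\<^sub>E A). coeff p y * X (Suc n) ^ y * (c g * (\<Prod>i=1..n. X i ^ g i)))"
      by (simp add: sum_product sum.cartesian_product)
    also have "\<dots> = (\<Sum>(y, g)\<in>A \<times> ({1..n} \<rightarrow>\<^sub>E A).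
        c' (g(Suc n := y)) * (\<Prod>i\<in>insert (Suc n) {1..n}. X i ^ (g(Suc n := y)) i))"
    proof (intro sum.cong refl, clarify)
      fix y g assume "g \<in> {1..n} \<rightarrow>\<^sub>E A"
      then have "g(Suc n := y, Suc n := undefined) = g" and "\<forall>i\<in>{1..n}. (g(Suc n := y)) i = g i"
        using nin by (auto simp: PiE_def extensional_def fun_eq_iff)
      then show "coeff p y * X (Suc n) ^ y * (c g * (\<Prod>i=1..n. X i ^ g i)) =
          c' (g(Suc n := y)) * (\<Prod>i\<in>insert (Suc n) {1..n}. X i ^ (g(Suc n := y)) i)"
        using nin by (simp add: c'_def)
    qed
    also have "\<dots> = (\<Sum>e\<in>{1..Suc n} \<rightarrow>\<^sub>E A. c' e * (\<Prod>i=1..Suc n. X i ^ e i))"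
      unfolding ins sum_PiE_insert[OF nin] ..
    finally show ?thesis
      unfolding F X_def[symmetric] A_def[symmetric] by (simp add: ins nin divide_inverse mult_ac)
  qed
  then show ?thesis
    unfolding multi_laurent_def by blast
qed

lemma multi_laurent_Bprod: "multi_laurent L n (\<lambda>lam. Bprod L \<gamma> h \<mu> lam n s s')"
proof (induction n arbitrary: s')
  case 0
  show ?case
    by (simp add: multi_laurent_const)
next
  case (Suc n)
  have "multi_laurent L (Suc n) (\<lambda>lam. Bprod L \<gamma> h \<mu> lam n s t * Bop L \<gamma> h \<mu> (lam (Suc n)) t s')"
    for t
  proof -
    obtain p where "degree p \<le> 2 * L"
      and "\<forall>x. Bop L \<gamma> h \<mu> x t s' = poly p (exp (2 * x)) / exp (2 * x) ^ L"
      using Bop_eq_poly_exp by blast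
    then show ?thesis
      using multi_laurent_mult_poly[OF Suc.IH] by simp
  qed
  then show ?case
    unfolding Bprod.simps qmul_def by (intro multi_laurent_sum finite_qstates)
qed

theorem lemma1:
  fixes L :: nat and \<gamma> h :: complex and \<mu> :: "nat \<Rightarrow> complex"
  assumes "L > 0"
  shows "\<exists>c :: (nat \<Rightarrow> nat) \<Rightarrow> complex. \<forall>lam :: nat \<Rightarrow> complex.
           Zpf L \<gamma> h \<mu> lam =
             (\<Sum>e\<in>{1..L} \<rightarrow>\<^sub>E {0..2*L}. c e * (\<Prod>i=1..L. exp (2 * lam i) ^ e i))
             * (\<Prod>i=1..L. inverse (exp (2 * lam i) ^ L))"
  using multi_laurent_Bprod[of L L \<gamma> h \<mu> "restrict (\<lambda>j. 1) {1..L}" "restrict (\<lambda>j. 0) {1..L}"]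
  unfolding multi_laurent_def Zpf_def .

end
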